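(* Let $k\ge1$ and $m\ge0$ be integers. The sum of the ending heights over all $k$-Dyck prefixes with exactly $m$ up-steps whose last step is an up-step (equivalently, the total number of down-steps needed to return to the $x$-axis, summed over these prefixes) equals $$\frac1{1+(m+1)(k+1)}\binom{1+(m+1)(k+1)}{m+1}-\frac1{1+m(k+1)}\binom{1+m(k+1)}{m}.$$
   Context: A $k$-Dyck prefix is a lattice path starting at $(0,0)$ with up-steps $(1,k)$ and down-steps $(1,-1)$ that never goes below the $x$-axis; the height of a point is its $y$-coordinate. *)

theory Defs
  imports Complex_Main
begin

text \<open>A lattice path is encoded as a list of steps: True = up-step (1,k),
  False = down-step (1,-1).\<close>

definition step_height :: "nat \<Rightarrow> bool \<Rightarrow> int" where
  "step_height k b = (if b then int k else -1)"

definition path_height :: "nat \<Rightarrow> bool list \<Rightarrow> int" where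
  "path_height k p = sum_list (map (step_height k) p)"

definition is_dyck_prefix :: "nat \<Rightarrow> bool list \<Rightarrow> bool" where
  "is_dyck_prefix k p \<longleftrightarrow> (\<forall>i \<le> length p. path_height k (take i p) \<ge> 0)"

definition num_ups :: "bool list \<Rightarrow> nat" where
  "num_ups p = length (filter id p)"

definition up_ending_prefixes :: "nat \<Rightarrow> nat \<Rightarrow> bool list set" where
  "up_ending_prefixes k m =
     {p. is_dyck_prefix k p \<and> num_ups p = m \<and> p \<noteq> [] \<and> last p}"

end

theory Submission
  imports Defs
begin

(* Let F(j, m) be the sum of the final heights of the up-ending prefixes with m up-steps of
  paths that start at height j and never go below the x-axis. Splitting off the first step
  gives a recurrence for F in j and m. The Raney numbers
  R(j, u) = (j + 1) / ((k + 1) u + j + 1) * binom((k + 1) u + j + 1, u), which count the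
  paths from height j with u up-steps that first reach height -1 at their end, satisfy the
  same first-step recurrence, and induction yields F(j, m) = R(j, m + 1) - R(j, m) for m >= 1.
  The theorem is the case j = 0. *)

definition raney :: "nat \<Rightarrow> nat \<Rightarrow> nat \<Rightarrow> real" where
  "raney k j u = real (j + 1) / real ((k + 1) * u + j + 1) * real (((k + 1) * u + j + 1) choose u)"

lemma raney_0 [simp]: "raney k j 0 = 1"
  by (simp add: raney_def)

lemma raney_Suc_0: "raney k j (Suc 0) = real (j + 1)"
  by (simp add: raney_def field_simps)

lemma real_binomial_Suc_Suc:
  "real (Suc n choose Suc u) = real (Suc n) / real (Suc u) * real (n choose u)"
  using Suc_times_binomial[of u n] by (simp add: field_simps flip: of_nat_mult)

lemma real_binomial_Suc_right:
  "real (n choose Suc u) = (real n - real u) / real (Suc u) * real (n choose u)"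
proof (cases "u \<le> n")
  case True
  have "Suc u * (n choose Suc u) = (n - u) * (n choose u)"
    using binomial_absorption binomial_absorb_comp by metis
  then have "real (Suc u) * real (n choose Suc u) = real (n - u) * real (n choose u)"
    by (metis of_nat_mult)
  with True show ?thesis by (simp add: field_simps)
qed (simp add: binomial_eq_0)

lemma raney_Suc_Suc: "raney k (Suc j) (Suc u) = raney k (j + Suc k) u + raney k j (Suc u)"
proof -
  define N where "N = (k + 1) * (u + 1) + j + 1"
  define c where "c = real (N choose u)"
  have "N > 0" by (simp add: N_def)
  have "real N = (real k + 1) * (real u + 1) + real j + 1"
    by (simp add: N_def algebra_simps)
  then have numerators:
    "real (j + 2) * real N = real (j + k + 2) * real (Suc u) + real (j + 1) * (real N - real u)"
    by (simp add: algebra_simps)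
  have weights: "real (j + 2) / real (Suc u)
      = real (j + k + 2) / real N + real (j + 1) / real N * ((real N - real u) / real (Suc u))"
    using \<open>N > 0\<close> numerators by (simp add: divide_simps mult.commute)
  have "raney k (Suc j) (Suc u) = real (j + 2) / real (Suc N) * real (Suc N choose Suc u)"
    by (simp add: raney_def N_def algebra_simps)
  also have "\<dots> = real (j + 2) / real (Suc u) * c"
    by (simp only: real_binomial_Suc_Suc c_def) (simp del: of_nat_Suc)
  also have "\<dots> = real (j + k + 2) / real N * c
      + real (j + 1) / real N * ((real N - real u) / real (Suc u) * c)"
    unfolding weights by (simp only: distrib_right mult.assoc)
  also have "\<dots> = raney k (j + Suc k) u + raney k j (Suc u)"
  proof -
    have "(k + 1) * u + (j + Suc k) + 1 = N" "(k + 1) * Suc u + j + 1 = N"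
      by (simp_all add: N_def)
    then show ?thesis
      unfolding raney_def real_binomial_Suc_right c_def by (simp add: algebra_simps)
  qed
  finally show ?thesis .
qed

lemma raney_0_Suc: "raney k 0 (Suc u) = raney k k u"
proof -
  define N where "N = (k + 1) * (u + 1)"
  have "real N = real (k + 1) * real (Suc u)" by (simp add: N_def algebra_simps)
  have "raney k 0 (Suc u) = 1 / real (Suc N) * real (Suc N choose Suc u)"
    by (simp add: raney_def N_def algebra_simps)
  also have "\<dots> = real (k + 1) / real N * real (N choose u)"
    by (simp only: real_binomial_Suc_Suc \<open>real N = _\<close>) (simp add: N_def del: of_nat_Suc)
  also have "\<dots> = raney k k u"
    by (simp add: raney_def N_def algebra_simps)
  finally show ?thesis .
qed

lemma path_height_Nil [simp]: "path_height k [] = 0"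
  by (simp add: path_height_def)

lemma path_height_Cons [simp]: "path_height k (b # p) = step_height k b + path_height k p"
  by (simp add: path_height_def)

lemma path_height_plus_length: "path_height k p + int (length p) = int (k + 1) * int (num_ups p)"
  by (induction p rule: list.induct) (auto simp: step_height_def num_ups_def algebra_simps)

definition final_height :: "nat \<Rightarrow> nat \<Rightarrow> bool list \<Rightarrow> int" where
  "final_height k j p = int j + path_height k p"

lemma final_height_Nil [simp]: "final_height k j [] = int j"
  by (simp add: final_height_def)

lemma final_height_Cons_up [simp]: "final_height k j (True # p) = final_height k (j + k) p"
  by (simp add: final_height_def step_height_def)

lemma final_height_Cons_down [simp]:
  "j > 0 \<Longrightarrow> final_height k j (False # p) = final_height k (j - 1) p"
  by (simp add: final_height_def step_height_def of_nat_diff)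

definition is_dyck_prefix_from :: "nat \<Rightarrow> nat \<Rightarrow> bool list \<Rightarrow> bool" where
  "is_dyck_prefix_from k j p \<longleftrightarrow> (\<forall>i \<le> length p. 0 \<le> final_height k j (take i p))"

lemma is_dyck_prefix_from_Nil [simp]: "is_dyck_prefix_from k j []"
  by (simp add: is_dyck_prefix_from_def)

lemma all_le_Suc_iff: "(\<forall>i \<le> Suc n. P i) \<longleftrightarrow> P 0 \<and> (\<forall>i \<le> n. P (Suc i))"
  by (metis Suc_le_mono le0 not0_implies_Suc)

lemma is_dyck_prefix_from_Cons_up [simp]:
  "is_dyck_prefix_from k j (True # p) \<longleftrightarrow> is_dyck_prefix_from k (j + k) p"
  by (simp add: is_dyck_prefix_from_def all_le_Suc_iff)

lemma is_dyck_prefix_from_Cons_down [simp]: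
  "is_dyck_prefix_from k j (False # p) \<longleftrightarrow> j > 0 \<and> is_dyck_prefix_from k (j - 1) p"
  by (cases j) (auto simp: is_dyck_prefix_from_def all_le_Suc_iff final_height_def step_height_def)

lemma is_dyck_prefix_from_length_le:
  assumes "is_dyck_prefix_from k j p"
  shows "length p \<le> j + (k + 1) * num_ups p"
proof -
  have "0 \<le> int j + path_height k p"
    using assms by (metis is_dyck_prefix_from_def final_height_def order_refl take_all)
  with path_height_plus_length[of k p] have "int (length p) \<le> int (j + (k + 1) * num_ups p)"
    by (simp add: algebra_simps)
  then show ?thesis by linarith
qed

definition up_ending_prefixes_from :: "nat \<Rightarrow> nat \<Rightarrow> nat \<Rightarrow> bool list set" where
  "up_ending_prefixes_from k j m =
     {p. is_dyck_prefix_from k j p \<and> num_ups p = m \<and> p \<noteq> [] \<and> last p}"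

lemma up_ending_prefixes_eq_from_0: "up_ending_prefixes k m = up_ending_prefixes_from k 0 m"
  by (simp add: up_ending_prefixes_def up_ending_prefixes_from_def is_dyck_prefix_def
      is_dyck_prefix_from_def final_height_def)

lemma finite_up_ending_prefixes_from: "finite (up_ending_prefixes_from k j m)"
proof (rule finite_subset)
  show "up_ending_prefixes_from k j m \<subseteq> {p. set p \<subseteq> UNIV \<and> length p \<le> j + (k + 1) * m}"
    by (auto simp: up_ending_prefixes_from_def dest: is_dyck_prefix_from_length_le)
  show "finite {p. set p \<subseteq> (UNIV :: bool set) \<and> length p \<le> j + (k + 1) * m}"
    by (rule finite_lists_length_le) simp
qed

lemma up_ending_prefixes_from_0: "up_ending_prefixes_from k j 0 = {}"
  by (auto simp: up_ending_prefixes_from_def num_ups_def filter_empty_conv dest: last_in_set)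

lemma up_ending_prefixes_from_Suc:
  "up_ending_prefixes_from k j (Suc m) =
     (if m = 0 then {[True]} else {})
     \<union> Cons True ` up_ending_prefixes_from k (j + k) m
     \<union> (if j = 0 then {} else Cons False ` up_ending_prefixes_from k (j - 1) (Suc m))"
proof (rule set_eqI)
  fix p
  show "p \<in> up_ending_prefixes_from k j (Suc m) \<longleftrightarrow> p \<in> (if m = 0 then {[True]} else {})
     \<union> Cons True ` up_ending_prefixes_from k (j + k) m
     \<union> (if j = 0 then {} else Cons False ` up_ending_prefixes_from k (j - 1) (Suc m))"
    by (cases p rule: list.exhaust[case_product bool.exhaust])
      (auto simp: up_ending_prefixes_from_def num_ups_def)
qed

definition final_height_sum :: "nat \<Rightarrow> nat \<Rightarrow> nat \<Rightarrow> int" where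
  "final_height_sum k j m = (\<Sum>p\<in>up_ending_prefixes_from k j m. final_height k j p)"

lemma final_height_sum_0: "final_height_sum k j 0 = 0"
  by (simp add: final_height_sum_def up_ending_prefixes_from_0)

lemma final_height_sum_Suc:
  "final_height_sum k j (Suc m) =
     (if m = 0 then int (j + k) else 0) + final_height_sum k (j + k) m
     + (if j = 0 then 0 else final_height_sum k (j - 1) (Suc m))"
proof -
  let ?single = "if m = 0 then {[True]} else {} :: bool list set"
  let ?up = "Cons True ` up_ending_prefixes_from k (j + k) m"
  let ?down = "if j = 0 then {} else Cons False ` up_ending_prefixes_from k (j - 1) (Suc m)"
  have fin: "finite ?single" "finite ?up" "finite ?down"
    by (simp_all add: finite_up_ending_prefixes_from)
  have disj: "?single \<inter> ?up = {}" "(?single \<union> ?up) \<inter> ?down = {}"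
    by (auto simp: up_ending_prefixes_from_def)
  have "final_height_sum k j (Suc m) = sum (final_height k j) (?single \<union> ?up \<union> ?down)"
    by (simp only: final_height_sum_def up_ending_prefixes_from_Suc[of k j m])
  also have "\<dots> = sum (final_height k j) ?single + sum (final_height k j) ?up
      + sum (final_height k j) ?down"
    using fin disj by (simp only: sum.union_disjoint finite_UnI)
  also have "sum (final_height k j) ?single = (if m = 0 then int (j + k) else 0)"
    by simp
  also have "sum (final_height k j) ?up = final_height_sum k (j + k) m"
    by (simp add: final_height_sum_def sum.reindex)
  also have "sum (final_height k j) ?down = (if j = 0 then 0 else final_height_sum k (j - 1) (Suc m))"
    by (simp add: final_height_sum_def sum.reindex)
  finally show ?thesis .
qed

lemma final_height_sum_eq_raney:
  "real_of_int (final_height_sum k j m) = raney k j (Suc m) - raney k j m - (if m = 0 then real j else 0)"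
proof (induction m arbitrary: j)
  case 0
  show ?case by (simp add: final_height_sum_0 raney_Suc_0)
next
  case (Suc m)
  note IH = Suc.IH
  show ?case
  proof (induction j)
    case 0
    show ?case
      using IH[of k] by (simp add: final_height_sum_Suc raney_0_Suc)
  next
    case (Suc i)
    then show ?case
      using IH[of "Suc i + k"] raney_Suc_Suc[of k i "Suc m"] raney_Suc_Suc[of k i m]
      by (simp add: final_height_sum_Suc)
  qed
qed

theorem mainTheorem4:
  fixes k m :: nat
  assumes "k \<ge> 1"
  shows "real_of_int (\<Sum>p\<in>up_ending_prefixes k m. path_height k p) =
    1 / real (1 + (m+1)*(k+1)) * real ((1 + (m+1)*(k+1)) choose (m+1))
    - 1 / real (1 + m*(k+1)) * real ((1 + m*(k+1)) choose m)"
proof -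
  have "(\<Sum>p\<in>up_ending_prefixes k m. path_height k p) = final_height_sum k 0 m"
    by (simp add: up_ending_prefixes_eq_from_0 final_height_sum_def final_height_def)
  then have "real_of_int (\<Sum>p\<in>up_ending_prefixes k m. path_height k p)
      = raney k 0 (Suc m) - raney k 0 m"
    using final_height_sum_eq_raney[of k 0 m] by simp
  moreover have "raney k 0 u = 1 / real (1 + u * (k + 1)) * real ((1 + u * (k + 1)) choose u)" for u
    by (simp add: raney_def algebra_simps)
  ultimately show ?thesis
    by (simp only: Suc_eq_plus1)
qed

end
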